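(* For all integers $j\ge1$ and $k\ge0$, $$\sum_{i=0}^k(-1)^i\binom{k}{i}\binom{i/2}{j}=(-1)^j2^{k-2j}\frac{k}{j}\binom{2j-k-1}{j-k}.$$ (Moreover, for $j=k=0$ the sum equals $1$.)
   Context: For real $x$ and integer $m$: $\binom{x}{m}=x(x-1)\cdots(x-m+1)/m!$ if $m\ge1$, $\binom{x}{0}=1$, and $\binom{x}{m}=0$ if $m<0$. *)

theory Defs
  imports Complex_Main
begin

definition binom_ri :: "real \<Rightarrow> int \<Rightarrow> real" where
  "binom_ri x m = (if m < 0 then 0 else x gchoose (nat m))"

end

theory Submission
  imports Defs
begin

text \<open>
  Let \<open>S k j\<close> be the alternating sum of \<open>binom (i/2) j\<close>. Since \<open>binom ((i+2)/2) (j+1) =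
  binom (i/2) (j+1) + binom (i/2) j\<close>, taking second differences gives the recurrence
  \<open>S (k+2) (j+1) = 2 S (k+1) (j+1) + S k j\<close>. For \<open>j \<ge> 1\<close> the right-hand side of the theorem
  equals \<open>(-1)^j 2^(k-2j) (binom (2j-k-1) (j-k) - binom (2j-k-1) (j-k-1))\<close>, which obeys the same
  recurrence by Pascal's rule. It remains to compare the values at \<open>j = 0\<close> and at \<open>k = 0, 1\<close>;
  the case \<open>k = 1\<close> is the classical \<open>binom (1/2) (n+1) = (-1)^n binom (2n) n / (2^(2n+1) (n+1))\<close>.
\<close>

lemma binom_ri_Pascal: "binom_ri (x + 1) m = binom_ri x m + binom_ri x (m - 1)"
proof (cases "m > 0")
  case True
  then have "nat m = Suc (nat (m - 1))" by simp
  then show ?thesis using True gbinomial_Suc_Suc[of x "nat (m - 1)"] by (simp add: binom_ri_def)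
next
  case False
  then show ?thesis by (cases "m = 0") (simp_all add: binom_ri_def)
qed

definition alt_binomial_sum :: "nat \<Rightarrow> (nat \<Rightarrow> 'a::comm_ring_1) \<Rightarrow> 'a" where
  "alt_binomial_sum k f = (\<Sum>i\<le>k. (-1)^i * of_nat (k choose i) * f i)"

lemma alt_binomial_sum_Suc:
  "alt_binomial_sum (Suc k) f = alt_binomial_sum k (\<lambda>i. f i - f (Suc i))"
proof -
  define g where "g i = (-1)^i * of_nat (k choose i) * f i" for i
  have shifted: "(\<Sum>i\<le>k. g (Suc i)) = alt_binomial_sum k f - f 0"
  proof -
    have "g 0 + (\<Sum>i\<le>k. g (Suc i)) = (\<Sum>i\<le>Suc k. g i)"
      by (rule sum.atMost_Suc_shift[symmetric])
    also have "\<dots> = alt_binomial_sum k f"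
      by (simp add: g_def alt_binomial_sum_def binomial_eq_0)
    finally show ?thesis by (simp add: g_def algebra_simps)
  qed
  have term_Suc: "(-1)^Suc i * of_nat (Suc k choose Suc i) * f (Suc i)
      = g (Suc i) - (-1)^i * of_nat (k choose i) * f (Suc i)" for i
    by (simp add: g_def algebra_simps)
  have "alt_binomial_sum (Suc k) f
      = f 0 + (\<Sum>i\<le>k. g (Suc i)) - (\<Sum>i\<le>k. (-1)^i * of_nat (k choose i) * f (Suc i))"
    unfolding alt_binomial_sum_def sum.atMost_Suc_shift term_Suc sum_subtractf by simp
  also have "\<dots> = alt_binomial_sum k (\<lambda>i. f i - f (Suc i))"
    unfolding shifted by (simp add: alt_binomial_sum_def algebra_simps sum_subtractf)
  finally show ?thesis .
qed

lemma alt_binomial_sum_linear: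
  "alt_binomial_sum k (\<lambda>i. a * f i + g i) = a * alt_binomial_sum k f + alt_binomial_sum k g"
  unfolding alt_binomial_sum_def by (simp add: sum.distrib sum_distrib_left algebra_simps)

lemma alt_binomial_sum_const: "alt_binomial_sum k (\<lambda>i. c) = (if k = 0 then c else 0)"
proof (cases k)
  case (Suc n)
  then show ?thesis by (simp add: alt_binomial_sum_Suc) (simp add: alt_binomial_sum_def)
qed (simp add: alt_binomial_sum_def)

definition half_binom :: "nat \<Rightarrow> nat \<Rightarrow> real" where
  "half_binom j i = binom_ri (real i / 2) (int j)"

lemma half_binom_0: "half_binom 0 = (\<lambda>i. 1)"
  by (simp add: half_binom_def binom_ri_def fun_eq_iff)

lemma half_binom_Suc_0: "half_binom (Suc j) 0 = 0"
  unfolding half_binom_def binom_ri_def nat_int by (simp add: gbinomial_0_left)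

lemma half_binom_Suc_Suc: "half_binom (Suc j) (Suc (Suc i)) = half_binom (Suc j) i + half_binom j i"
proof -
  have shift: "real (Suc (Suc i)) / 2 = real i / 2 + 1" by simp
  show ?thesis unfolding half_binom_def shift binom_ri_Pascal by simp
qed

lemma alt_binomial_sum_half_binom_rec:
  "alt_binomial_sum (Suc (Suc k)) (half_binom (Suc j))
     = 2 * alt_binomial_sum (Suc k) (half_binom (Suc j)) + alt_binomial_sum k (half_binom j)"
proof -
  let ?b = "half_binom (Suc j)"
  have "alt_binomial_sum (Suc (Suc k)) ?b
      = alt_binomial_sum k (\<lambda>i. (?b i - ?b (Suc i)) - (?b (Suc i) - ?b (Suc (Suc i))))"
    by (simp only: alt_binomial_sum_Suc)
  also have "\<dots> = alt_binomial_sum k (\<lambda>i. 2 * (?b i - ?b (Suc i)) + half_binom j i)"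
    by (simp add: half_binom_Suc_Suc algebra_simps)
  also have "\<dots> = 2 * alt_binomial_sum (Suc k) ?b + alt_binomial_sum k (half_binom j)"
    by (simp only: alt_binomial_sum_linear alt_binomial_sum_Suc)
  finally show ?thesis .
qed

text \<open>Unlike the right-hand side of the theorem, this form is also correct for \<open>j = 0\<close>
  and satisfies the recurrence directly.\<close>

definition alt_sum_closed_form :: "nat \<Rightarrow> nat \<Rightarrow> real" where
  "alt_sum_closed_form k j = (-1)^j * 2 powi (int k - 2 * int j) *
     (binom_ri (of_int (2 * int j - int k - 1)) (int j - int k)
      - binom_ri (of_int (2 * int j - int k - 1)) (int j - int k - 1))"

lemma alt_sum_closed_form_rec:
  "alt_sum_closed_form (Suc (Suc k)) (Suc j) = 2 * alt_sum_closed_form (Suc k) (Suc j) + alt_sum_closed_form k j"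
proof -
  define x where "x = real_of_int (2 * int j - int k - 1)"
  define m where "m = int j - int k"
  define c where "c = ((-1)^j * 2 powi (int k - 2 * int j) :: real)"
  have "int (Suc k) - 2 * int (Suc j) = (int k - 2 * int j) - 1" by simp
  then have halve: "2 powi (int (Suc k) - 2 * int (Suc j)) = (2 powi (int k - 2 * int j) / 2 :: real)"
    by (simp add: power_int_diff)
  have "alt_sum_closed_form (Suc (Suc k)) (Suc j) = - c * (binom_ri x (m - 1) - binom_ri x (m - 1 - 1))"
    by (simp add: alt_sum_closed_form_def x_def m_def c_def algebra_simps)
  moreover have "alt_sum_closed_form (Suc k) (Suc j) = - c / 2 * (binom_ri (x + 1) m - binom_ri (x + 1) (m - 1))"
  proof -
    have "real_of_int (2 * int (Suc j) - int (Suc k) - 1) = x + 1" "int (Suc j) - int (Suc k) = m"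
      by (simp_all add: x_def m_def)
    then show ?thesis unfolding alt_sum_closed_form_def halve by (simp add: c_def)
  qed
  moreover have "alt_sum_closed_form k j = c * (binom_ri x m - binom_ri x (m - 1))"
    by (simp add: alt_sum_closed_form_def x_def m_def c_def)
  ultimately show ?thesis
    using binom_ri_Pascal[of x m] binom_ri_Pascal[of x "m - 1"] by (simp add: algebra_simps)
qed

lemma gchoose_Suc_minus_gchoose:
  fixes x :: "'a::field_char_0"
  assumes "x \<noteq> of_nat t"
  shows "(x gchoose Suc t) - (x gchoose t) = (x - 2 * of_nat t - 1) / (x - of_nat t) * (x gchoose Suc t)"
proof -
  have "x gchoose t = of_nat (Suc t) / (x - of_nat t) * (x gchoose Suc t)"
    using gbinomial_mult_1[of x t] assms by (simp add: field_simps)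
  then show ?thesis
    using assms by (simp add: field_simps)
qed

lemma alt_sum_closed_form_eq:
  assumes "j \<ge> 1"
  shows "alt_sum_closed_form k j = (-1)^j * 2 powi (int k - 2 * int j) * (real k / real j)
           * binom_ri (of_int (2 * int j - int k - 1)) (int j - int k)"
proof -
  define x where "x = real_of_int (2 * int j - int k - 1)"
  have "binom_ri x (int j - int k) - binom_ri x (int j - int k - 1)
      = real k / real j * binom_ri x (int j - int k)"
  proof (cases "k < j")
    case True
    then obtain t where j: "j = Suc (k + t)" using less_imp_Suc_add by blast
    define y where "y = real (j + t)"
    have "y \<noteq> real t" "y - real t = real j" "y - 2 * real t - 1 = real k"
      using assms by (simp_all add: y_def j)
    then have "(y gchoose Suc t) - (y gchoose t) = real k / real j * (y gchoose Suc t)"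
      using gchoose_Suc_minus_gchoose[of y t] by simp
    moreover have "x = y" "nat (int j - int k) = Suc t" "int j - int k - 1 = int t"
      by (simp_all add: x_def y_def j)
    ultimately show ?thesis
      by (simp add: binom_ri_def)
  qed (use assms in \<open>auto simp: binom_ri_def\<close>)
  then show ?thesis
    by (simp add: alt_sum_closed_form_def x_def)
qed

lemma half_gchoose_Suc:
  "(1/2::real) gchoose Suc n = (-1)^n * (2*n choose n) / (2^(2*n+1) * Suc n)"
proof -
  have poch: "pochhammer (1/2) n = real (2*n choose n) * fact n / 2^(2*n)"
    using fact_double[of n, where 'a=real] binomial_fact[of n "2*n", where 'a=real]
    by (simp add: mult_2 field_simps)
  have "(1/2::real) gchoose Suc n = (-1)^n * pochhammer (1/2) n / (2 * fact (Suc n))"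
    by (simp add: gbinomial_pochhammer pochhammer_rec field_simps)
  also have "\<dots> = (-1)^n * real (2*n choose n) / (2 * 2^(2*n) * real (Suc n))"
    unfolding poch fact_Suc by (simp del: of_nat_Suc)
  finally show ?thesis by (simp add: power_add algebra_simps)
qed

lemma alt_sum_closed_form_0_right: "alt_sum_closed_form k 0 = (if k = 0 then 1 else 0)"
  by (simp add: alt_sum_closed_form_def binom_ri_def)

lemma alt_sum_closed_form_0_Suc: "alt_sum_closed_form 0 (Suc n) = 0"
  by (simp add: alt_sum_closed_form_eq)

lemma alt_sum_closed_form_1_Suc: "alt_sum_closed_form 1 (Suc n) = - ((1/2) gchoose Suc n)"
proof -
  have exponent: "int 1 - 2 * int (Suc n) = - int (2 * n + 1)" by simp
  have "(2::real) powi (int 1 - 2 * int (Suc n)) = 1 / 2 ^ (2 * n + 1)"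
    unfolding exponent by (simp only: power_int_minus_divide power_int_of_nat)
  moreover have "binom_ri (of_int (2 * int (Suc n) - int 1 - 1)) (int (Suc n) - int 1) = real (2 * n choose n)"
    by (simp add: binom_ri_def binomial_gbinomial)
  ultimately show ?thesis
    by (simp add: alt_sum_closed_form_eq half_gchoose_Suc distrib_left)
qed

lemma alt_binomial_sum_half_binom: "alt_binomial_sum k (half_binom j) = alt_sum_closed_form k j"
proof (induction k arbitrary: j rule: induct_nat_012)
  case 0
  show ?case
    by (cases j) (simp_all add: alt_binomial_sum_def half_binom_0 half_binom_Suc_0
        alt_sum_closed_form_0_right alt_sum_closed_form_0_Suc)
next
  case 1
  show ?case
  proof (cases j)
    case 0
    then show ?thesis by (simp add: half_binom_0 alt_binomial_sum_const alt_sum_closed_form_0_right)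
  next
    case (Suc n)
    have "half_binom (Suc n) 1 = (1/2) gchoose Suc n"
      unfolding half_binom_def binom_ri_def nat_int by simp
    then show ?thesis
      using alt_sum_closed_form_1_Suc[of n] by (simp add: Suc alt_binomial_sum_def half_binom_Suc_0)
  qed
next
  case (ge2 k)
  show ?case
  proof (cases j)
    case 0
    then show ?thesis by (simp add: half_binom_0 alt_binomial_sum_const alt_sum_closed_form_0_right)
  next
    case (Suc n)
    then show ?thesis
      by (simp add: alt_binomial_sum_half_binom_rec alt_sum_closed_form_rec ge2.IH)
  qed
qed

theorem mainTheorem3:
  shows "(\<forall>(j::nat) (k::nat). j \<ge> 1 \<longrightarrow>
            (\<Sum>i=0..k. (-1::real)^i * real (k choose i) * binom_ri (real i / 2) (int j))
            = (-1::real)^j * (2::real) powi (int k - 2 * int j) * (real k / real j)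
                * binom_ri (of_int (2 * int j - int k - 1)) (int j - int k))
       \<and> (\<Sum>i=0..(0::nat). (-1::real)^i * real (0 choose i) * binom_ri (real i / 2) 0) = 1"
proof -
  have "(\<Sum>i=0..k. (-1::real)^i * real (k choose i) * binom_ri (real i / 2) (int j))
      = alt_sum_closed_form k j" for j k
    using alt_binomial_sum_half_binom[of k j]
    by (simp add: alt_binomial_sum_def half_binom_def atLeast0AtMost)
  then show ?thesis
    using alt_sum_closed_form_eq by (simp add: binom_ri_def)
qed

end
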